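(* Let $H = \{h_0 = 0_H, h_1, \dots, h_{t-1}\}$ be a finite abelian group with a fixed enumeration of its elements, and let $\boldsymbol{\lambda} = (\lambda_0,\dots,\lambda_{t-1})$ be a sequence of nonnegative integers. Suppose that for infinitely many primes $p$, every non-zero sum subset of type $\boldsymbol{\lambda}$ of $(\mathbb{Z}_p \times H) \setminus \{0_{\mathbb{Z}_p\times H}\}$ is sequenceable. Then every non-zero sum subset of type $\boldsymbol{\lambda}$ of $(\mathbb{Z} \times H) \setminus \{0_{\mathbb{Z}\times H}\}$ is sequenceable.
   Context: For a finite subset $S$ of an abelian group with $|S| = k$, an ordering $(x_1,\dots,x_k)$ of $S$ has partial sums $(y_0,\dots,y_k)$ with $y_0 = 0$, $y_i = x_1+\cdots+x_i$. It is a sequencing if the $y_i$ are pairwise distinct, and a rotational sequencing if they are pairwise distinct except that $y_k = y_0 = 0$; $S$ is sequenceable if it has one or the other. $S$ is non-zero sum if the sum of its elements is nonzero. For an abelian group $G$ and a finite abelian group $H = \{h_0=0_H,\dots,h_{t-1}\}$, the type of a finite subset $S \subseteq G \times H$ is $(\lambda_0,\dots,\lambda_{t-1})$ where $\lambda_i$ is the number of elements of $S$ whose $H$-coordinate equals $h_i$. *)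

theory Defs
  imports "HOL-Computational_Algebra.Primes"
begin

text \<open>An abelian group is given here by its addition and zero; sets are subsets of it.
  Partial sums of an ordering xs: y_i = x_1 + ... + x_i, y_0 = zero.\<close>

definition psum :: "('a \<Rightarrow> 'a \<Rightarrow> 'a) \<Rightarrow> 'a \<Rightarrow> 'a list \<Rightarrow> nat \<Rightarrow> 'a" where
  "psum add z xs i = foldl add z (take i xs)"

definition is_ordering :: "'a set \<Rightarrow> 'a list \<Rightarrow> bool" where
  "is_ordering S xs \<longleftrightarrow> distinct xs \<and> set xs = S"

definition is_sequencing :: "('a \<Rightarrow> 'a \<Rightarrow> 'a) \<Rightarrow> 'a \<Rightarrow> 'a set \<Rightarrow> 'a list \<Rightarrow> bool" where
  "is_sequencing add z S xs \<longleftrightarrow>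
     is_ordering S xs \<and> inj_on (psum add z xs) {0..length xs}"

definition is_rotational_sequencing :: "('a \<Rightarrow> 'a \<Rightarrow> 'a) \<Rightarrow> 'a \<Rightarrow> 'a set \<Rightarrow> 'a list \<Rightarrow> bool" where
  "is_rotational_sequencing add z S xs \<longleftrightarrow>
     is_ordering S xs \<and> psum add z xs (length xs) = z \<and>
     inj_on (psum add z xs) {0..<length xs}"

definition sequenceable :: "('a \<Rightarrow> 'a \<Rightarrow> 'a) \<Rightarrow> 'a \<Rightarrow> 'a set \<Rightarrow> bool" where
  "sequenceable add z S \<longleftrightarrow>
     (\<exists>xs. is_sequencing add z S xs \<or> is_rotational_sequencing add z S xs)"

text \<open>Sum of the elements of a finite set (groups are abelian, so any ordering gives it).\<close>
definition nonzero_sum :: "('a \<Rightarrow> 'a \<Rightarrow> 'a) \<Rightarrow> 'a \<Rightarrow> 'a set \<Rightarrow> bool" where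
  "nonzero_sum add z S \<longleftrightarrow> finite S \<and> (\<forall>xs. is_ordering S xs \<longrightarrow> foldl add z xs \<noteq> z)"

definition of_type :: "(nat \<Rightarrow> 'h) \<Rightarrow> nat \<Rightarrow> (nat \<Rightarrow> nat) \<Rightarrow> ('g \<times> 'h) set \<Rightarrow> bool" where
  "of_type e t lam S \<longleftrightarrow> finite S \<and> (\<forall>i<t. card {x\<in>S. snd x = e i} = lam i)"

text \<open>Z x H, and Z_p x H with Z_p represented by {0..<p} with addition mod p.\<close>
definition addZ :: "int \<times> 'h::ab_group_add \<Rightarrow> int \<times> 'h \<Rightarrow> int \<times> 'h" where
  "addZ x y = (fst x + fst y, snd x + snd y)"

definition addZp :: "nat \<Rightarrow> int \<times> 'h::ab_group_add \<Rightarrow> int \<times> 'h \<Rightarrow> int \<times> 'h" where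
  "addZp p x y = ((fst x + fst y) mod int p, snd x + snd y)"

definition ZpH :: "nat \<Rightarrow> (int \<times> 'h) set" where
  "ZpH p = {0..<int p} \<times> UNIV"

end

theory Submission
  imports Defs "HOL-Library.Infinite_Set"
begin

(* Reducing the first coordinate modulo p is a homomorphism Z x H -> Z_p x H that fixes the
  H-coordinate. Let B be the sum of |a| over the elements (a, h) of S and take one of the given
  primes p > 2B. Then |a| + |a'| < p for any two elements (a, h), (a', h') of S, {0} and the sum
  of S, so the reduction tells them apart: it is injective on S and maps S to a non-zero sum
  subset of (Z_p x H) - {0} of the same type. Being non-zero sum, this image has no rotational sequencing, and a sequencing of
  it pulls back along the homomorphism to a sequencing of S. *)

lemma foldl_map_hom:
  assumes "\<And>x y. f (add x y) = add' (f x) (f y)"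
  shows "foldl add' (f z) (map f xs) = f (foldl add z xs)"
  by (induction xs arbitrary: z) (simp_all flip: assms)

lemma psum_map_hom:
  assumes "\<And>x y. f (add x y) = add' (f x) (f y)" and "f z = z'"
  shows "psum add' z' (map f xs) i = f (psum add z xs i)"
  using foldl_map_hom[of f add add' z "take i xs", OF assms(1)] assms(2)
  by (simp add: psum_def take_map)

lemma is_ordering_imageE:
  assumes "inj_on f S" and "is_ordering (f ` S) ys"
  obtains xs where "is_ordering S xs" and "map f xs = ys"
proof
  have ys: "distinct ys" "set ys = f ` S"
    using assms(2) by (auto simp: is_ordering_def)
  show "map f (map (inv_into S f) ys) = ys"
    unfolding map_map using ys(2) by (intro map_idI) (simp add: f_inv_into_f)
  show "is_ordering S (map (inv_into S f) ys)"
    using ys assms(1) inj_on_inv_into[of "set ys" f S]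
    by (simp add: is_ordering_def distinct_map inv_into_image_cancel)
qed

lemma is_sequencing_of_map:
  assumes "\<And>x y. f (add x y) = add' (f x) (f y)" and "f z = z'"
    and "is_ordering S xs" and "is_sequencing add' z' (f ` S) (map f xs)"
  shows "is_sequencing add z S xs"
proof -
  have "psum add' z' (map f xs) = f \<circ> psum add z xs"
    using psum_map_hom[of f add add' z z', OF assms(1,2)] by fastforce
  then have "inj_on (f \<circ> psum add z xs) {0..length xs}"
    using assms(4) by (simp add: is_sequencing_def)
  then show ?thesis
    using assms(3) inj_on_imageI2 by (auto simp: is_sequencing_def)
qed

lemma nonzero_sum_not_rotational:
  assumes "nonzero_sum add z S"
  shows "\<not> is_rotational_sequencing add z S xs"
  using assms unfolding nonzero_sum_def is_rotational_sequencing_def psum_def by auto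

lemma nonzero_sum_image:
  assumes "\<And>x y. f (add x y) = add' (f x) (f y)" and "f z = z'"
    and "inj_on f S" and "finite S"
    and "\<And>xs. is_ordering S xs \<Longrightarrow> f (foldl add z xs) \<noteq> z'"
  shows "nonzero_sum add' z' (f ` S)"
  unfolding nonzero_sum_def
proof (intro conjI allI impI)
  show "finite (f ` S)" using assms(4) by simp
next
  fix ys assume "is_ordering (f ` S) ys"
  then obtain xs where "is_ordering S xs" "map f xs = ys"
    using assms(3) is_ordering_imageE by blast
  then show "foldl add' z' ys \<noteq> z'"
    using foldl_map_hom[of f add add', OF assms(1)] assms(2,5) by metis
qed

lemma sequenceable_of_image:
  assumes "\<And>x y. f (add x y) = add' (f x) (f y)" and "f z = z'"
    and "inj_on f S" and "nonzero_sum add' z' (f ` S)" and "sequenceable add' z' (f ` S)"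
  shows "sequenceable add z S"
proof -
  obtain ys where "is_sequencing add' z' (f ` S) ys \<or> is_rotational_sequencing add' z' (f ` S) ys"
    using assms(5) unfolding sequenceable_def by blast
  then have "is_sequencing add' z' (f ` S) ys"
    using nonzero_sum_not_rotational[OF assms(4)] by blast
  moreover obtain xs where "is_ordering S xs" "map f xs = ys"
    using is_ordering_imageE[OF assms(3)] calculation by (auto simp: is_sequencing_def)
  ultimately show ?thesis
    using is_sequencing_of_map[of f add add' z z', OF assms(1,2)] by (auto simp: sequenceable_def)
qed

lemma of_type_image:
  assumes "inj_on f S" and "\<And>x. x \<in> S \<Longrightarrow> snd (f x) = snd x"
  shows "of_type e t lam (f ` S) \<longleftrightarrow> of_type e t lam S"
proof -
  have "card {y \<in> f ` S. snd y = c} = card {x \<in> S. snd x = c}" for c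
  proof -
    have "{y \<in> f ` S. snd y = c} = f ` {x \<in> S. snd x = c}"
      using assms(2) by force
    moreover have "inj_on f {x \<in> S. snd x = c}"
      using assms(1) by (rule inj_on_subset) auto
    ultimately show ?thesis by (simp add: card_image)
  qed
  then show ?thesis
    using assms(1) by (simp add: of_type_def finite_image_iff)
qed

definition reduce_mod :: "nat \<Rightarrow> int \<times> 'h \<Rightarrow> int \<times> 'h" where
  "reduce_mod p x = (fst x mod int p, snd x)"

lemma snd_reduce_mod [simp]: "snd (reduce_mod p x) = snd x"
  by (simp add: reduce_mod_def)

lemma reduce_mod_zero [simp]: "reduce_mod p (0, 0) = (0, 0)"
  by (simp add: reduce_mod_def)

lemma reduce_mod_addZ:
  "reduce_mod p (addZ x y) = addZp p (reduce_mod p x) (reduce_mod p y)"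
  by (simp add: reduce_mod_def addZ_def addZp_def mod_add_eq)

lemma reduce_mod_in_ZpH: "p > 0 \<Longrightarrow> reduce_mod p x \<in> ZpH p"
  by (simp add: reduce_mod_def ZpH_def)

lemma reduce_mod_eq_iff:
  assumes "\<bar>fst x\<bar> + \<bar>fst y\<bar> < int p"
  shows "reduce_mod p x = reduce_mod p y \<longleftrightarrow> x = y"
proof
  assume eq: "reduce_mod p x = reduce_mod p y"
  then have "int p dvd fst x - fst y"
    by (simp add: reduce_mod_def mod_eq_dvd_iff)
  then have "fst x = fst y"
    using dvd_imp_le_int[of "fst x - fst y" "int p"] assms by fastforce
  then show "x = y"
    using eq by (simp add: reduce_mod_def prod_eq_iff)
qed simp

lemma reduce_mod_eq_zero_iff:
  "\<bar>fst x\<bar> < int p \<Longrightarrow> reduce_mod p x = (0, 0) \<longleftrightarrow> x = (0, 0)"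
  using reduce_mod_eq_iff[of x "(0, 0)" p] by simp

lemma fst_foldl_addZ: "fst (foldl addZ z xs) = fst z + sum_list (map fst xs)"
  by (induction xs arbitrary: z) (simp_all add: addZ_def)

lemma abs_fst_le_sum_abs_fst:
  fixes S :: "('a::linordered_idom \<times> 'b) set"
  shows "finite S \<Longrightarrow> x \<in> S \<Longrightarrow> \<bar>fst x\<bar> \<le> (\<Sum>y\<in>S. \<bar>fst y\<bar>)"
  using member_le_sum[of x S "\<lambda>y. \<bar>fst y\<bar>"] by simp

lemma inj_on_reduce_mod:
  assumes "finite S" and "2 * (\<Sum>x\<in>S. \<bar>fst x\<bar>) < int p"
  shows "inj_on (reduce_mod p) S"
proof (rule inj_onI)
  fix x y assume "x \<in> S" "y \<in> S" "reduce_mod p x = reduce_mod p y"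
  moreover have "\<bar>fst x\<bar> + \<bar>fst y\<bar> < int p"
    using abs_fst_le_sum_abs_fst[OF assms(1) \<open>x \<in> S\<close>]
      abs_fst_le_sum_abs_fst[OF assms(1) \<open>y \<in> S\<close>] assms(2)
    by linarith
  ultimately show "x = y"
    using reduce_mod_eq_iff by blast
qed

lemma reduce_mod_image_subset_ZpH:
  assumes "finite S" and "2 * (\<Sum>x\<in>S. \<bar>fst x\<bar>) < int p" and "(0, 0) \<notin> S"
  shows "reduce_mod p ` S \<subseteq> ZpH p - {(0, 0)}"
proof (rule image_subsetI)
  fix x assume "x \<in> S"
  have "\<bar>fst x\<bar> < int p"
    using abs_fst_le_sum_abs_fst[OF assms(1) \<open>x \<in> S\<close>] assms(2) by linarith
  moreover have "x \<noteq> (0, 0)"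
    using \<open>x \<in> S\<close> assms(3) by blast
  ultimately have "reduce_mod p x \<noteq> (0, 0)"
    by (simp add: reduce_mod_eq_zero_iff)
  moreover have "p > 0"
    using \<open>\<bar>fst x\<bar> < int p\<close> by linarith
  ultimately show "reduce_mod p x \<in> ZpH p - {(0, 0)}"
    by (simp add: reduce_mod_in_ZpH)
qed

lemma nonzero_sum_reduce_mod:
  assumes "nonzero_sum addZ (0, 0) S" and "2 * (\<Sum>x\<in>S. \<bar>fst x\<bar>) < int p"
  shows "nonzero_sum (addZp p) (0, 0) (reduce_mod p ` S)"
proof (rule nonzero_sum_image[of "reduce_mod p" addZ "addZp p", OF reduce_mod_addZ reduce_mod_zero])
  show "finite S" using assms(1) by (simp add: nonzero_sum_def)
  then show "inj_on (reduce_mod p) S" using assms(2) by (rule inj_on_reduce_mod)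
  fix xs assume xs: "is_ordering S xs"
  then have "foldl addZ (0, 0) xs \<noteq> (0, 0)"
    using assms(1) by (simp add: nonzero_sum_def)
  moreover have "\<bar>fst (foldl addZ (0, 0) xs)\<bar> \<le> (\<Sum>x\<in>S. \<bar>fst x\<bar>)"
    using xs by (simp add: fst_foldl_addZ is_ordering_def sum_list_distinct_conv_sum_set)
  then have "\<bar>fst (foldl addZ (0, 0) xs)\<bar> < int p"
    using assms(2) abs_ge_zero[of "fst (foldl addZ (0, 0) xs)"] by linarith
  ultimately show "reduce_mod p (foldl addZ (0, 0) xs) \<noteq> (0, 0)"
    by (simp add: reduce_mod_eq_zero_iff)
qed

theorem proposition4p2:
  fixes e :: "nat \<Rightarrow> 'h::{finite, ab_group_add}" and lam :: "nat \<Rightarrow> nat"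
  assumes "bij_betw e {0..<card (UNIV :: 'h set)} UNIV" and "e 0 = 0"
    and "infinite {p::nat. prime p \<and>
           (\<forall>S. S \<subseteq> ZpH p - {(0, 0)} \<and> of_type e (card (UNIV :: 'h set)) lam S \<and> nonzero_sum (addZp p) (0, 0) S
                \<longrightarrow> sequenceable (addZp p) (0, 0) S)}"
  shows "\<forall>S::(int \<times> 'h) set. S \<subseteq> UNIV - {(0, 0)} \<and> of_type e (card (UNIV :: 'h set)) lam S \<and> nonzero_sum addZ (0, 0) S
           \<longrightarrow> sequenceable addZ (0, 0) S"
proof (intro allI impI)
  fix S :: "(int \<times> 'h) set"
  assume "S \<subseteq> UNIV - {(0, 0)} \<and> of_type e (card (UNIV :: 'h set)) lam S \<and> nonzero_sum addZ (0, 0) S"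
  then have S0: "(0, 0) \<notin> S" and type_S: "of_type e (card (UNIV :: 'h set)) lam S"
    and nzS: "nonzero_sum addZ (0, 0) S" and fin: "finite S"
    by (auto simp: nonzero_sum_def)
  define B where "B = (\<Sum>x\<in>S. \<bar>fst x\<bar>)"
  obtain p where "nat (2 * B) < p"
    and p: "\<And>T. T \<subseteq> ZpH p - {(0, 0)} \<Longrightarrow> of_type e (card (UNIV :: 'h set)) lam T \<Longrightarrow>
              nonzero_sum (addZp p) (0, 0) T \<Longrightarrow> sequenceable (addZp p) (0, 0) T"
    using assms(3)[unfolded infinite_nat_iff_unbounded, THEN spec[of _ "nat (2 * B)"]] by auto
  then have large: "2 * B < int p" by linarith
  have inj: "inj_on (reduce_mod p) S"
    using fin large unfolding B_def by (rule inj_on_reduce_mod)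
  have nz: "nonzero_sum (addZp p) (0, 0) (reduce_mod p ` S)"
    using nzS large unfolding B_def by (rule nonzero_sum_reduce_mod)
  have "reduce_mod p ` S \<subseteq> ZpH p - {(0, 0)}"
    using fin large S0 unfolding B_def by (rule reduce_mod_image_subset_ZpH)
  moreover have "of_type e (card (UNIV :: 'h set)) lam (reduce_mod p ` S)"
    using type_S by (simp add: of_type_image[OF inj])
  ultimately have "sequenceable (addZp p) (0, 0) (reduce_mod p ` S)"
    using nz by (rule p)
  then show "sequenceable addZ (0, 0) S"
    by (rule sequenceable_of_image[of "reduce_mod p" addZ "addZp p",
          OF reduce_mod_addZ reduce_mod_zero inj nz])
qed

end
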